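(* Let $n\ge 2$ and let $H$ be a graph with vertex set $[n]$. If $H$ is Henneberg, then there exists a pair of rooted binary trees $T_1,T_2$ on leaf set $[n]$ such that the restricted clade graph $G^H_{T_1,T_2}$ is a tree.
   Context: A graph is Henneberg if it is the complete graph $K_2$, or it can be obtained from a smaller Henneberg graph by one of the Henneberg moves: (i) adding a new vertex adjacent to two existing vertices; (ii) removing an existing edge $ij$ and adding a new vertex adjacent to $i$, $j$ and one other existing vertex (graphs are considered up to relabeling of vertices). A rooted binary tree on leaf set $[n]$ has leaves labeled bijectively by $[n]$ and each internal vertex has exactly two children. A clade is the set of leaves below an internal vertex; $\mathrm{clade}(T)$ is the set of clades (including $[n]$); $c_T(S)$ is the smallest clade of $T$ containing $S\subseteq[n]$. The restricted clade graph $G^H_{T_1,T_2}$ is the bipartite multigraph with vertex set the disjoint union of $\mathrm{clade}(T_1)$ and $\mathrm{clade}(T_2)$, having for each edge $ij$ of $H$ an edge $e_{ij}$ joining $c_{T_1}(\{i,j\})$ to $c_{T_2}(\{i,j\})$. *)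

theory Defs
  imports Main
begin

definition simple_graph :: "'a set \<Rightarrow> 'a set set \<Rightarrow> bool" where
  "simple_graph V E \<longleftrightarrow> (\<forall>e\<in>E. \<exists>i j. e = {i, j} \<and> i \<noteq> j \<and> i \<in> V \<and> j \<in> V)"

text \<open>Henneberg graphs. Vertex labels are arbitrary, new vertices are fresh labels,
  so the class is closed under relabeling (graphs up to relabeling).\<close>

inductive henneberg :: "'a set \<Rightarrow> 'a set set \<Rightarrow> bool" where
  K2: "a \<noteq> b \<Longrightarrow> henneberg {a, b} {{a, b}}"
| move1: "\<lbrakk>henneberg V E; v \<notin> V; i \<in> V; j \<in> V; i \<noteq> j\<rbrakk>
          \<Longrightarrow> henneberg (insert v V) (E \<union> {{v, i}, {v, j}})"
| move2: "\<lbrakk>henneberg V E; v \<notin> V; {i, j} \<in> E; i \<noteq> j; k \<in> V; k \<noteq> i; k \<noteq> j\<rbrakk>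
          \<Longrightarrow> henneberg (insert v V) ((E - {{i, j}}) \<union> {{v, i}, {v, j}, {v, k}})"

datatype btree = Leaf nat | Node btree btree

fun leaf_list :: "btree \<Rightarrow> nat list" where
  "leaf_list (Leaf i) = [i]"
| "leaf_list (Node l r) = leaf_list l @ leaf_list r"

definition leaves :: "btree \<Rightarrow> nat set" where
  "leaves t = set (leaf_list t)"

definition binary_tree_on :: "nat set \<Rightarrow> btree \<Rightarrow> bool" where
  "binary_tree_on L t \<longleftrightarrow> distinct (leaf_list t) \<and> set (leaf_list t) = L"

fun clades :: "btree \<Rightarrow> nat set set" where
  "clades (Leaf i) = {}"
| "clades (Node l r) = insert (leaves (Node l r)) (clades l \<union> clades r)"

definition cT :: "btree \<Rightarrow> nat set \<Rightarrow> nat set" where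
  "cT T S = (THE C. C \<in> clades T \<and> S \<subseteq> C \<and> (\<forall>C'\<in>clades T. S \<subseteq> C' \<longrightarrow> C \<subseteq> C'))"

text \<open>A multigraph: vertex set V, edge index set I, and endpoints of each edge.\<close>

definition mg_connected :: "'v set \<Rightarrow> 'e set \<Rightarrow> ('e \<Rightarrow> 'v \<times> 'v) \<Rightarrow> bool" where
  "mg_connected V I ends \<longleftrightarrow>
     (\<forall>u\<in>V. \<forall>w\<in>V. (\<lambda>x y. \<exists>e\<in>I. ends e = (x, y) \<or> ends e = (y, x))\<^sup>*\<^sup>* u w)"

text \<open>A cycle: distinct edges e_0..e_(k-1) and distinct vertices v_0..v_(k-1), k \<ge> 1,
  with e_m joining v_m and v_(m+1 mod k). (Two parallel edges form a cycle of length 2.)\<close>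
definition mg_has_cycle :: "'v set \<Rightarrow> 'e set \<Rightarrow> ('e \<Rightarrow> 'v \<times> 'v) \<Rightarrow> bool" where
  "mg_has_cycle V I ends \<longleftrightarrow>
     (\<exists>es vs. es \<noteq> [] \<and> length vs = length es \<and> distinct es \<and> distinct vs \<and>
        set es \<subseteq> I \<and> set vs \<subseteq> V \<and>
        (\<forall>m<length es. ends (es ! m) = (vs ! m, vs ! ((m + 1) mod length es)) \<or>
                        ends (es ! m) = (vs ! ((m + 1) mod length es), vs ! m)))"

definition mg_is_tree :: "'v set \<Rightarrow> 'e set \<Rightarrow> ('e \<Rightarrow> 'v \<times> 'v) \<Rightarrow> bool" where
  "mg_is_tree V I ends \<longleftrightarrow>
     V \<noteq> {} \<and> finite V \<and> finite I \<and> (\<forall>e\<in>I. fst (ends e) \<in> V \<and> snd (ends e) \<in> V) \<and>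
     mg_connected V I ends \<and> \<not> mg_has_cycle V I ends"

text \<open>Vertices: disjoint union of clade(T1) and clade(T2); one edge e_ij for each edge {i,j} of H,
  joining c_T1({i,j}) to c_T2({i,j}).\<close>

definition rcg_vertices :: "btree \<Rightarrow> btree \<Rightarrow> (nat set + nat set) set" where
  "rcg_vertices T1 T2 = Inl ` clades T1 \<union> Inr ` clades T2"

definition rcg_ends :: "btree \<Rightarrow> btree \<Rightarrow> nat set \<Rightarrow> (nat set + nat set) \<times> (nat set + nat set)" where
  "rcg_ends T1 T2 e = (Inl (cT T1 e), Inr (cT T2 e))"

definition restricted_clade_graph_is_tree :: "nat set set \<Rightarrow> btree \<Rightarrow> btree \<Rightarrow> bool" where
  "restricted_clade_graph_is_tree E T1 T2 \<longleftrightarrow> mg_is_tree (rcg_vertices T1 T2) E (rcg_ends T1 T2)"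

end

theory Submission
  imports Defs
begin

text \<open>
  We induct along the Henneberg construction and keep the restricted clade graph a tree in the
  numerical form: connected, with one edge fewer than vertices. A new vertex \<open>v\<close> is grafted
  as the sibling of a leaf \<open>a\<close> in \<open>T\<^sub>1\<close> and of a leaf \<open>b\<close> in \<open>T\<^sub>2\<close>. Every clade
  containing \<open>a\<close> (resp. \<open>b\<close>) absorbs \<open>v\<close>; this renames the old vertices of the clade graph
  injectively and leaves every old edge in place, and the two new clades \<open>{a, v}\<close> and
  \<open>{b, v}\<close> become new vertices, which the edges \<open>va\<close> and \<open>vb\<close> attach as leaves. In move (ii) deleting the edge \<open>ij\<close> splits the tree into two components, and the
  third new edge \<open>vc\<close> joins \<open>c\<^sub>T\<^sub>1({a, c})\<close> to \<open>c\<^sub>T\<^sub>2({b, c})\<close>; for one of the placements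
  \<open>(a, b, c) = (k, j, i), (i, k, j), (i, j, k)\<close> these two clades lie in different components,
  so \<open>vc\<close> reconnects the tree.
\<close>

section \<open>Connectivity of multigraphs\<close>

definition mg_edge :: "'e set \<Rightarrow> ('e \<Rightarrow> 'v \<times> 'v) \<Rightarrow> 'v \<Rightarrow> 'v \<Rightarrow> bool" where
  "mg_edge I ends x y \<longleftrightarrow> (\<exists>e\<in>I. ends e = (x, y))"

abbreviation mg_reach :: "'e set \<Rightarrow> ('e \<Rightarrow> 'v \<times> 'v) \<Rightarrow> 'v \<Rightarrow> 'v \<Rightarrow> bool" where
  "mg_reach I ends \<equiv> equivclp (mg_edge I ends)"

lemma mg_connected_iff_reach:
  "mg_connected V I ends \<longleftrightarrow> (\<forall>u\<in>V. \<forall>w\<in>V. mg_reach I ends u w)"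
proof -
  have "(\<lambda>x y. \<exists>e\<in>I. ends e = (x, y) \<or> ends e = (y, x)) = symclp (mg_edge I ends)"
    by (auto simp: fun_eq_iff symclp_def mg_edge_def)
  then show ?thesis
    unfolding mg_connected_def equivclp_def by simp
qed

lemma mg_reach_edge:
  "e \<in> I \<Longrightarrow> ends e = (x, y) \<or> ends e = (y, x) \<Longrightarrow> mg_reach I ends x y"
  unfolding mg_edge_def by blast

lemma mg_reach_mono:
  assumes "I \<subseteq> J" and "mg_reach I ends x y"
  shows "mg_reach J ends x y"
  using assms(2)
proof (induction rule: equivclp_induct)
  case (step y z)
  then have "mg_edge J ends y z \<or> mg_edge J ends z y"
    using assms(1) unfolding mg_edge_def by blast
  with step.IH show ?case
    by (rule equivclp_into_equivclp)
qed simp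

lemma mg_reach_empty: "mg_reach {} ends x y \<Longrightarrow> x = y"
  by (induction rule: equivclp_induct) (auto simp: mg_edge_def)

lemma mg_reach_image:
  assumes "\<forall>e\<in>I. ends' e = map_prod h h (ends e)" and "mg_reach I ends x y"
  shows "mg_reach I ends' (h x) (h y)"
  using assms(2)
proof (induction rule: equivclp_induct)
  case (step y z)
  then have "mg_edge I ends' (h y) (h z) \<or> mg_edge I ends' (h z) (h y)"
    using assms(1) unfolding mg_edge_def by force
  with step.IH show ?case
    by (rule equivclp_into_equivclp)
qed simp

lemma mg_reach_image_inj:
  assumes "inj_on h V" "ends ` I \<subseteq> V \<times> V" "\<forall>e\<in>I. ends' e = map_prod h h (ends e)"
    and "x \<in> V" "y \<in> V" "mg_reach I ends' (h x) (h y)"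
  shows "mg_reach I ends x y"
proof -
  have "\<forall>e\<in>I. ends e = map_prod (inv_into V h) (inv_into V h) (ends' e)"
    using assms(1-3) by (force simp: map_prod_def split: prod.splits)
  from mg_reach_image[OF this assms(6)] show ?thesis
    using assms(1,4,5) by simp
qed

lemma mg_reach_insert_edge:
  assumes "mg_reach (insert e I) ends a b" "ends e = (x, y)"
  shows "mg_reach I ends a b \<or> (mg_reach I ends a x \<and> mg_reach I ends y b)
     \<or> (mg_reach I ends a y \<and> mg_reach I ends x b)"
  using assms(1)
proof (induction rule: equivclp_induct)
  case base
  then show ?case by simp
next
  case (step b c)
  let ?reach = "mg_reach I ends"
  have "(mg_edge I ends b c \<or> mg_edge I ends c b) \<or> (b = x \<and> c = y) \<or> (b = y \<and> c = x)"
    using step.hyps(2) assms(2) unfolding mg_edge_def by auto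
  then consider "mg_edge I ends b c \<or> mg_edge I ends c b" | "b = x" "c = y" | "b = y" "c = x"
    by blast
  then show ?case
  proof cases
    case 1
    have "?reach u c" if "?reach u b" for u
      using equivclp_into_equivclp[OF that 1] .
    then show ?thesis
      using step.IH by blast
  next
    case 2
    then show ?thesis
      using step.IH by auto
  next
    case 3
    then show ?thesis
      using step.IH by auto
  qed
qed

lemma mg_reach_delete_edge:
  assumes "e \<in> I" "ends e = (P, Q)" "mg_reach I ends P z"
  shows "mg_reach (I - {e}) ends P z \<or> mg_reach (I - {e}) ends Q z"
proof -
  have "insert e (I - {e}) = I"
    using assms(1) by blast
  then show ?thesis
    using mg_reach_insert_edge[of e "I - {e}" ends P z P Q] assms(2,3) by auto
qed

lemma mg_connected_delete_edge:
  assumes "mg_connected V I ends" "e \<in> I" "ends e = (P, Q)" "mg_reach (I - {e}) ends P Q"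
  shows "mg_connected V (I - {e}) ends"
proof -
  let ?reach = "mg_reach (I - {e}) ends"
  have "?reach x y" if "mg_reach I ends x y" for x y
  proof -
    have "insert e (I - {e}) = I"
      using assms(2) by blast
    with that have "mg_reach (insert e (I - {e})) ends x y"
      by simp
    from mg_reach_insert_edge[OF this assms(3)] show ?thesis
    proof (elim disjE conjE)
      assume "?reach x y"
      then show ?thesis .
    next
      assume "?reach x P" "?reach Q y"
      then show ?thesis
        using assms(4) by (blast intro: equivclp_trans)
    next
      assume "?reach x Q" "?reach P y"
      then show ?thesis
        using equivclp_sym[OF assms(4)] by (blast intro: equivclp_trans)
    qed
  qed
  then show ?thesis
    using assms(1) unfolding mg_connected_iff_reach by blast
qed

definition mg_component_reps :: "'v set \<Rightarrow> 'e set \<Rightarrow> ('e \<Rightarrow> 'v \<times> 'v) \<Rightarrow> 'v set \<Rightarrow> bool" where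
  "mg_component_reps V I ends R \<longleftrightarrow> R \<subseteq> V \<and> (\<forall>x\<in>V. \<exists>r\<in>R. mg_reach I ends x r) \<and>
     (\<forall>r\<in>R. \<forall>r'\<in>R. mg_reach I ends r r' \<longrightarrow> r = r')"

lemma mg_component_reps_merge_unique:
  assumes reps: "mg_component_reps V I ends R" and xy: "ends e = (x, y)"
    and rx: "rx \<in> R" "mg_reach I ends x rx" and ry: "ry \<in> R" "mg_reach I ends y ry"
    and r: "r \<in> insert rx (R - {ry})" "r' \<in> insert rx (R - {ry})" "mg_reach (insert e I) ends r r'"
  shows "r = r'"
proof -
  let ?reach = "mg_reach I ends"
  have unique: "u = u'" if "u \<in> R" "u' \<in> R" "?reach u u'" for u u'
    using reps that unfolding mg_component_reps_def by blast
  have is_rx: "u = rx" if "u \<in> R" "?reach u x" for u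
    using unique[OF that(1) rx(1) equivclp_trans[OF that(2) rx(2)]] .
  have is_ry: "u = ry" if "u \<in> R" "?reach u y" for u
    using unique[OF that(1) ry(1) equivclp_trans[OF that(2) ry(2)]] .
  have "r \<in> R" "r' \<in> R"
    using r(1,2) rx(1) by auto
  from mg_reach_insert_edge[OF r(3) xy] show ?thesis
  proof (elim disjE conjE)
    assume "?reach r r'"
    then show ?thesis
      using unique \<open>r \<in> R\<close> \<open>r' \<in> R\<close> by blast
  next
    assume "?reach r x" "?reach y r'"
    then show ?thesis
      using is_rx is_ry[OF \<open>r' \<in> R\<close> equivclp_sym] \<open>r \<in> R\<close> r(2) by blast
  next
    assume "?reach r y" "?reach x r'"
    then show ?thesis
      using is_ry is_rx[OF \<open>r' \<in> R\<close> equivclp_sym] \<open>r \<in> R\<close> r(1) by blast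
  qed
qed

lemma mg_component_reps_merge:
  assumes reps: "mg_component_reps V I ends R" and xy: "ends e = (x, y)"
    and rx: "rx \<in> R" "mg_reach I ends x rx" and ry: "ry \<in> R" "mg_reach I ends y ry"
  shows "mg_component_reps V (insert e I) ends (insert rx (R - {ry}))"
proof -
  let ?reach' = "mg_reach (insert e I) ends"
  have lift: "?reach' u w" if "mg_reach I ends u w" for u w
    using mg_reach_mono[OF _ that] by blast
  have "?reach' x y"
    using xy by (intro mg_reach_edge) auto
  then have ry_rx: "?reach' ry rx"
    by (meson equivclp_sym equivclp_trans lift rx(2) ry(2))
  have "\<exists>r\<in>insert rx (R - {ry}). ?reach' z r" if "z \<in> V" for z
  proof -
    obtain r where r: "r \<in> R" "mg_reach I ends z r"
      using reps \<open>z \<in> V\<close> unfolding mg_component_reps_def by blast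
    show ?thesis
    proof (cases "r = ry")
      case True
      then show ?thesis
        using equivclp_trans[OF lift[OF r(2)]] ry_rx by auto
    next
      case False
      then show ?thesis
        using r lift by blast
    qed
  qed
  then show ?thesis
    using reps rx(1) mg_component_reps_merge_unique[OF reps xy rx ry]
    unfolding mg_component_reps_def by blast
qed

lemma mg_component_reps_insert_edge:
  assumes reps: "mg_component_reps V I ends R" and "finite R"
    and xy: "ends e = (x, y)" "x \<in> V" "y \<in> V"
  shows "\<exists>R'. mg_component_reps V (insert e I) ends R' \<and> card R \<le> card R' + 1"
proof -
  obtain rx ry where rx: "rx \<in> R" "mg_reach I ends x rx" and ry: "ry \<in> R" "mg_reach I ends y ry"
    using reps xy(2,3) unfolding mg_component_reps_def by meson
  have "card R \<le> card (insert rx (R - {ry})) + 1"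
    using \<open>finite R\<close> ry(1) by (metis card_Diff_singleton card_insert_le le_diff_conv)
  with mg_component_reps_merge[OF reps xy(1) rx ry] show ?thesis
    by blast
qed

lemma mg_component_reps_exist:
  assumes "finite I" "finite V" "ends ` I \<subseteq> V \<times> V"
  shows "\<exists>R. mg_component_reps V I ends R \<and> card V \<le> card I + card R"
  using assms
proof (induction I rule: finite_induct)
  case empty
  have "mg_component_reps V {} ends V"
    unfolding mg_component_reps_def by (blast dest: mg_reach_empty intro: equivclp_refl)
  then show ?case by auto
next
  case (insert e I)
  then obtain R where R: "mg_component_reps V I ends R" "card V \<le> card I + card R"
    by auto
  then have "finite R"
    using \<open>finite V\<close> finite_subset unfolding mg_component_reps_def by blast
  obtain x y where "ends e = (x, y)" "x \<in> V" "y \<in> V"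
    using insert.prems(2) by force
  then obtain R' where "mg_component_reps V (insert e I) ends R'" "card R \<le> card R' + 1"
    using mg_component_reps_insert_edge[OF R(1) \<open>finite R\<close>] by blast
  then show ?case
    using R(2) insert.hyps by auto
qed

lemma mg_connected_card_le:
  assumes "finite V" "finite I" "ends ` I \<subseteq> V \<times> V" "mg_connected V I ends"
  shows "card V \<le> card I + 1"
proof -
  obtain R where R: "mg_component_reps V I ends R" "card V \<le> card I + card R"
    using mg_component_reps_exist[OF assms(2,1,3)] by blast
  then have "card R \<le> 1"
    using assms(1,4) finite_subset unfolding mg_component_reps_def mg_connected_iff_reach
    by (metis card_le_Suc0_iff_eq One_nat_def subsetD)
  then show ?thesis
    using R(2) by simp
qed

lemma mg_cycle_edge_removable:
  assumes "mg_has_cycle V I ends" "mg_connected V I ends"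
  shows "\<exists>e\<in>I. mg_connected V (I - {e}) ends"
proof -
  obtain es vs where cyc: "es \<noteq> []" "length vs = length es" "distinct es" "set es \<subseteq> I"
    "\<forall>m<length es. ends (es ! m) = (vs ! m, vs ! ((m + 1) mod length es)) \<or>
                   ends (es ! m) = (vs ! ((m + 1) mod length es), vs ! m)"
    using assms(1) unfolding mg_has_cycle_def by blast
  define k where "k = length es"
  define e where "e = es ! 0"
  let ?reach = "mg_reach (I - {e}) ends"
  have "0 < k"
    using cyc(1) unfolding k_def by simp
  have "e \<in> I"
    using cyc(1,4) unfolding e_def by (simp add: subset_iff)
  have path: "?reach (vs ! (1 mod k)) (vs ! (m mod k))" if "1 \<le> m" "m \<le> k" for m
    using that(1)
  proof (induction m rule: dec_induct)
    case (step n)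
    then have "n < k"
      using that(2) by simp
    with step.hyps(1) have "es ! n \<in> I - {e}"
      using cyc(1,3,4) unfolding e_def k_def by (auto simp: nth_eq_iff_index_eq)
    moreover have "ends (es ! n) = (vs ! (n mod k), vs ! (Suc n mod k)) \<or>
                   ends (es ! n) = (vs ! (Suc n mod k), vs ! (n mod k))"
      using cyc(5) \<open>n < k\<close> unfolding k_def by simp
    ultimately have "?reach (vs ! (n mod k)) (vs ! (Suc n mod k))"
      by (rule mg_reach_edge)
    with step.IH show ?case
      by (rule equivclp_trans)
  qed simp
  have "?reach (vs ! 0) (vs ! (1 mod k))"
    using equivclp_sym[OF path[of k]] \<open>0 < k\<close> by simp
  moreover have "ends e = (vs ! 0, vs ! (1 mod k)) \<or> ends e = (vs ! (1 mod k), vs ! 0)"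
    using cyc(5) \<open>0 < k\<close> unfolding e_def k_def by auto
  ultimately have "mg_connected V (I - {e}) ends"
    using mg_connected_delete_edge[OF assms(2) \<open>e \<in> I\<close>, of "vs ! 0" "vs ! (1 mod k)"]
      mg_connected_delete_edge[OF assms(2) \<open>e \<in> I\<close>, of "vs ! (1 mod k)" "vs ! 0"]
      equivclp_sym[of "mg_edge (I - {e}) ends" "vs ! 0" "vs ! (1 mod k)"]
    by blast
  with \<open>e \<in> I\<close> show ?thesis ..
qed

section \<open>Trees by edge count\<close>

definition mg_tree_by_count :: "'v set \<Rightarrow> 'e set \<Rightarrow> ('e \<Rightarrow> 'v \<times> 'v) \<Rightarrow> bool" where
  "mg_tree_by_count V I ends \<longleftrightarrow> finite V \<and> finite I \<and> ends ` I \<subseteq> V \<times> V \<and>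
     mg_connected V I ends \<and> card I + 1 = card V"

lemma mg_tree_by_count_delete_edge:
  assumes "mg_tree_by_count V I ends" "e \<in> I"
  shows "\<not> mg_connected V (I - {e}) ends"
proof
  assume "mg_connected V (I - {e}) ends"
  then have "card V \<le> card (I - {e}) + 1"
    using assms unfolding mg_tree_by_count_def by (intro mg_connected_card_le) auto
  then show False
    using assms card_Suc_Diff1[of I e] unfolding mg_tree_by_count_def by simp
qed

lemma mg_tree_by_count_is_tree:
  assumes "mg_tree_by_count V I ends"
  shows "mg_is_tree V I ends"
proof -
  have "mg_connected V I ends"
    using assms unfolding mg_tree_by_count_def by blast
  then have "\<not> mg_has_cycle V I ends"
    using mg_cycle_edge_removable mg_tree_by_count_delete_edge[OF assms] by blast
  then show ?thesis
    using assms unfolding mg_tree_by_count_def mg_is_tree_def by force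
qed

lemma mg_tree_by_count_singleton: "mg_tree_by_count {x} {} ends"
  unfolding mg_tree_by_count_def mg_connected_iff_reach by simp

lemma mg_tree_by_count_image:
  assumes "mg_tree_by_count V I ends" "inj_on h V" "\<forall>e\<in>I. ends' e = map_prod h h (ends e)"
  shows "mg_tree_by_count (h ` V) I ends'"
proof -
  have "ends' ` I \<subseteq> h ` V \<times> h ` V"
    using assms(1,3) unfolding mg_tree_by_count_def by force
  moreover have "mg_connected (h ` V) I ends'"
    using assms(1) mg_reach_image[OF assms(3)] unfolding mg_tree_by_count_def mg_connected_iff_reach
    by blast
  ultimately show ?thesis
    using assms(1) card_image[OF assms(2)] unfolding mg_tree_by_count_def by auto
qed

lemma mg_tree_by_count_add_leaf:
  assumes "mg_tree_by_count V I ends" "w \<notin> V" "e \<notin> I" "u \<in> V"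
    and "ends e = (w, u) \<or> ends e = (u, w)"
  shows "mg_tree_by_count (insert w V) (insert e I) ends"
proof -
  let ?reach' = "mg_reach (insert e I) ends"
  have "?reach' z u" if "z \<in> insert w V" for z
  proof (cases "z = w")
    case True
    then show ?thesis
      using assms(5) by (intro mg_reach_edge) auto
  next
    case False
    then have "mg_reach I ends z u"
      using that assms(1,4) unfolding mg_tree_by_count_def mg_connected_iff_reach by blast
    then show ?thesis
      by (rule mg_reach_mono[rotated]) blast
  qed
  then have "mg_connected (insert w V) (insert e I) ends"
    unfolding mg_connected_iff_reach by (blast intro: equivclp_trans[OF _ equivclp_sym])
  then show ?thesis
    using assms unfolding mg_tree_by_count_def by auto
qed

lemma mg_tree_by_count_bridge:
  assumes "mg_tree_by_count V I ends" "e \<in> I" "ends e = (P, Q)"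
  shows "\<not> mg_reach (I - {e}) ends P Q"
proof
  assume "mg_reach (I - {e}) ends P Q"
  moreover have "mg_connected V I ends"
    using assms(1) unfolding mg_tree_by_count_def by blast
  ultimately have "mg_connected V (I - {e}) ends"
    using mg_connected_delete_edge[of V I ends e P Q] assms(2,3) by blast
  with mg_tree_by_count_delete_edge[OF assms(1,2)] show False ..
qed

lemma mg_connected_exchange_edge:
  assumes conn: "mg_connected V I ends" and "e \<in> I" "ends e = (P, Q)" "P \<in> V"
    and XY: "ends e' = (X, Y)" "X \<in> V" "Y \<in> V" "\<not> mg_reach (I - {e}) ends X Y"
  shows "mg_connected V (insert e' (I - {e})) ends"
proof -
  let ?reach = "mg_reach (I - {e}) ends" and ?reach' = "mg_reach (insert e' (I - {e})) ends"
  have side: "?reach P z \<or> ?reach Q z" if "z \<in> V" for z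
    using mg_reach_delete_edge[of e I ends P Q z, OF \<open>e \<in> I\<close> \<open>ends e = (P, Q)\<close>]
      conn \<open>P \<in> V\<close> that unfolding mg_connected_iff_reach by blast
  have lift: "?reach' u w" if "?reach u w" for u w
    using mg_reach_mono[OF _ that] by blast
  have "\<not> (?reach A X \<and> ?reach A Y)" for A
    using XY(4) equivclp_trans[OF equivclp_sym[of "mg_edge (I - {e}) ends" A X]] by blast
  then consider "?reach P X" "?reach Q Y" | "?reach Q X" "?reach P Y"
    using side[OF XY(2)] side[OF XY(3)] by blast
  then have "?reach' P Q"
  proof cases
    case 1
    have "?reach' P X" "?reach' X Y" "?reach' Y Q"
      using lift[OF 1(1)] lift[OF equivclp_sym[OF 1(2)]] XY(1) by (auto intro: mg_reach_edge)
    then show ?thesis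
      using equivclp_trans by metis
  next
    case 2
    have "?reach' P Y" "?reach' Y X" "?reach' X Q"
      using lift[OF 2(2)] lift[OF equivclp_sym[OF 2(1)]] XY(1) by (auto intro: mg_reach_edge)
    then show ?thesis
      using equivclp_trans by metis
  qed
  then have "?reach' z P" if "z \<in> V" for z
    using side[OF that] lift equivclp_sym equivclp_trans by metis
  then show ?thesis
    unfolding mg_connected_iff_reach by (blast intro: equivclp_trans[OF _ equivclp_sym])
qed

lemma mg_tree_by_count_exchange:
  assumes tree: "mg_tree_by_count V I ends" and "e \<in> I" "e' \<notin> I"
    and XY: "ends e' = (X, Y)" "X \<in> V" "Y \<in> V" "\<not> mg_reach (I - {e}) ends X Y"
  shows "mg_tree_by_count V (insert e' (I - {e})) ends"
proof -
  obtain P Q where PQ: "ends e = (P, Q)"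
    by fastforce
  moreover have "P \<in> V"
    using tree \<open>e \<in> I\<close> PQ unfolding mg_tree_by_count_def by force
  ultimately have "mg_connected V (insert e' (I - {e})) ends"
    using mg_connected_exchange_edge[OF _ \<open>e \<in> I\<close> _ _ XY] tree
    unfolding mg_tree_by_count_def by blast
  moreover have "card (insert e' (I - {e})) = card I"
    using tree \<open>e \<in> I\<close> \<open>e' \<notin> I\<close> card_Suc_Diff1[of I e] unfolding mg_tree_by_count_def
    by simp
  ultimately show ?thesis
    using tree XY unfolding mg_tree_by_count_def by auto
qed

section \<open>Clades\<close>

lemma leaves_Leaf [simp]: "leaves (Leaf i) = {i}"
  by (simp add: leaves_def)

lemma leaves_Node [simp]: "leaves (Node l r) = leaves l \<union> leaves r"
  by (simp add: leaves_def)

lemma leaves_nonempty: "leaves t \<noteq> {}"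
  by (induction t) auto

lemma set_leaf_list [simp]: "set (leaf_list t) = leaves t"
  by (simp add: leaves_def)

lemma binary_tree_on_iff: "binary_tree_on L t \<longleftrightarrow> distinct (leaf_list t) \<and> leaves t = L"
  by (simp add: binary_tree_on_def)

lemma clade_subset_leaves: "C \<in> clades t \<Longrightarrow> C \<subseteq> leaves t"
  by (induction t) auto

lemma clade_not_subset_singleton:
  assumes "distinct (leaf_list t)" "C \<in> clades t"
  shows "\<not> C \<subseteq> {a}"
  using assms
proof (induction t)
  case (Node l r)
  show ?case
  proof (cases "C = leaves (Node l r)")
    case True
    obtain x y where "x \<in> leaves l" "y \<in> leaves r"
      using leaves_nonempty by blast
    then show ?thesis
      using True Node.prems(1) by auto
  next
    case False
    then show ?thesis
      using Node by auto
  qed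
qed simp

lemma cT_eqI:
  assumes "C \<in> clades t" "S \<subseteq> C" "\<And>C'. C' \<in> clades t \<Longrightarrow> S \<subseteq> C' \<Longrightarrow> C \<subseteq> C'"
  shows "cT t S = C"
  unfolding cT_def using assms by (intro the_equality) (auto intro: subset_antisym)

lemma least_clade_exists:
  assumes "distinct (leaf_list t)" "S \<subseteq> leaves t" "x \<in> S" "y \<in> S" "x \<noteq> y"
  shows "\<exists>C\<in>clades t. S \<subseteq> C \<and> (\<forall>C'\<in>clades t. S \<subseteq> C' \<longrightarrow> C \<subseteq> C')"
  using assms(1,2)
proof (induction t)
  case (Leaf i)
  then show ?case
    using assms(3-5) by auto
next
  case (Node l r)
  have dl: "distinct (leaf_list l)" and dr: "distinct (leaf_list r)"
    and disjoint: "leaves l \<inter> leaves r = {}"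
    using Node.prems(1) by simp_all
  have not_below: "\<not> S \<subseteq> C'" if "C' \<in> clades u" "\<not> S \<subseteq> leaves u" for u C'
    using clade_subset_leaves[OF that(1)] that(2) by blast
  consider "S \<subseteq> leaves l" | "S \<subseteq> leaves r" | "\<not> S \<subseteq> leaves l" "\<not> S \<subseteq> leaves r"
    by blast
  then show ?case
  proof cases
    case 1
    then obtain C where C: "C \<in> clades l" "S \<subseteq> C" "\<forall>C'\<in>clades l. S \<subseteq> C' \<longrightarrow> C \<subseteq> C'"
      using Node.IH(1)[OF dl] by blast
    have "\<not> S \<subseteq> leaves r"
      using 1 disjoint assms(3) by blast
    then show ?thesis
      using C not_below[of _ r] clade_subset_leaves[OF C(1)] by (intro bexI[of _ C]) auto
  next
    case 2
    then obtain C where C: "C \<in> clades r" "S \<subseteq> C" "\<forall>C'\<in>clades r. S \<subseteq> C' \<longrightarrow> C \<subseteq> C'"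
      using Node.IH(2)[OF dr] by blast
    have "\<not> S \<subseteq> leaves l"
      using 2 disjoint assms(3) by blast
    then show ?thesis
      using C not_below[of _ l] clade_subset_leaves[OF C(1)] by (intro bexI[of _ C]) auto
  next
    case 3
    then show ?thesis
      using Node.prems(2) not_below[of _ l] not_below[of _ r] by auto
  qed
qed

lemma cT_least:
  assumes "binary_tree_on L t" "S \<subseteq> L" "x \<in> S" "y \<in> S" "x \<noteq> y"
  shows "cT t S \<in> clades t" "S \<subseteq> cT t S" "\<And>C. C \<in> clades t \<Longrightarrow> S \<subseteq> C \<Longrightarrow> cT t S \<subseteq> C"
proof -
  have "distinct (leaf_list t)" "S \<subseteq> leaves t"
    using assms(1,2) unfolding binary_tree_on_iff by auto
  from least_clade_exists[OF this assms(3-5)] obtain C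
    where C: "C \<in> clades t" "S \<subseteq> C" "\<forall>C'\<in>clades t. S \<subseteq> C' \<longrightarrow> C \<subseteq> C'"
    by blast
  then have "cT t S = C"
    by (intro cT_eqI) auto
  with C show "cT t S \<in> clades t" "S \<subseteq> cT t S" "\<And>C. C \<in> clades t \<Longrightarrow> S \<subseteq> C \<Longrightarrow> cT t S \<subseteq> C"
    by auto
qed

section \<open>Grafting a sibling leaf\<close>

fun add_sibling :: "nat \<Rightarrow> nat \<Rightarrow> btree \<Rightarrow> btree" where
  "add_sibling a v (Leaf i) = (if i = a then Node (Leaf a) (Leaf v) else Leaf i)"
| "add_sibling a v (Node l r) = Node (add_sibling a v l) (add_sibling a v r)"

definition sibling_clade :: "nat \<Rightarrow> nat \<Rightarrow> nat set \<Rightarrow> nat set" where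
  "sibling_clade a v C = (if a \<in> C then insert v C else C)"

lemma sibling_clade_mono: "C \<subseteq> C' \<Longrightarrow> sibling_clade a v C \<subseteq> sibling_clade a v C'"
  by (auto simp: sibling_clade_def)

lemma sibling_clade_inj: "inj_on (sibling_clade a v) {C. v \<notin> C}"
  by (rule inj_onI) (auto simp: sibling_clade_def split: if_splits)

lemma sibling_clade_Un: "sibling_clade a v (A \<union> B) = sibling_clade a v A \<union> sibling_clade a v B"
  by (auto simp: sibling_clade_def)

lemma sibling_clade_eq_pair: "v \<notin> C \<Longrightarrow> sibling_clade a v C = {a, v} \<Longrightarrow> C \<subseteq> {a}"
  by (auto simp: sibling_clade_def split: if_splits)

lemma leaves_add_sibling: "leaves (add_sibling a v t) = sibling_clade a v (leaves t)"
  by (induction t) (auto simp: sibling_clade_def)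

lemma clades_add_sibling:
  "clades (add_sibling a v t) =
     sibling_clade a v ` clades t \<union> (if a \<in> leaves t then {{a, v}} else {})"
proof (induction t)
  case (Node l r)
  have "clades (add_sibling a v (Node l r)) =
      insert (sibling_clade a v (leaves (Node l r))) (clades (add_sibling a v l) \<union> clades (add_sibling a v r))"
    by (simp add: leaves_add_sibling sibling_clade_Un)
  then show ?case
    unfolding Node.IH by (simp add: image_Un Un_ac)
qed (auto simp: sibling_clade_def)

lemma binary_tree_on_add_sibling:
  assumes "binary_tree_on L t" "a \<in> L" "v \<notin> L"
  shows "binary_tree_on (insert v L) (add_sibling a v t)"
proof -
  have "distinct (leaf_list (add_sibling a v t))" if "distinct (leaf_list t)" "v \<notin> leaves t"
    using that by (induction t) (auto simp: leaves_add_sibling sibling_clade_def)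
  then show ?thesis
    using assms by (auto simp: binary_tree_on_iff leaves_add_sibling sibling_clade_def)
qed

lemma cT_add_sibling:
  assumes "binary_tree_on L t" "v \<notin> L" "S \<subseteq> L" "x \<in> S" "y \<in> S" "x \<noteq> y"
  shows "cT (add_sibling a v t) S = sibling_clade a v (cT t S)"
proof (rule cT_eqI)
  note least = cT_least[OF assms(1,3-6)]
  show "sibling_clade a v (cT t S) \<in> clades (add_sibling a v t)"
    using least(1) by (simp add: clades_add_sibling)
  show "S \<subseteq> sibling_clade a v (cT t S)"
    using least(2) by (auto simp: sibling_clade_def)
  fix C' assume C': "C' \<in> clades (add_sibling a v t)" "S \<subseteq> C'"
  have "v \<notin> S"
    using assms(2,3) by blast
  show "sibling_clade a v (cT t S) \<subseteq> C'"
  proof (cases "C' = {a, v}")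
    case True
    then show ?thesis
      using C'(2) \<open>v \<notin> S\<close> assms(4-6) by auto
  next
    case False
    then obtain C where C: "C \<in> clades t" "C' = sibling_clade a v C"
      using C'(1) by (auto simp: clades_add_sibling split: if_splits)
    have "S \<subseteq> C"
      using C'(2) \<open>v \<notin> S\<close> unfolding C(2) sibling_clade_def by (auto split: if_splits)
    then show ?thesis
      unfolding C(2) by (intro sibling_clade_mono least(3)[OF C(1)])
  qed
qed

lemma cT_add_sibling_pair:
  assumes "a \<in> leaves t"
  shows "cT (add_sibling a v t) {a, v} = {a, v}"
  using assms by (intro cT_eqI) (auto simp: clades_add_sibling)

lemma cT_add_sibling_new:
  assumes "binary_tree_on L t" "v \<notin> L" "a \<in> L" "x \<in> L" "x \<noteq> a"
  shows "cT (add_sibling a v t) {v, x} = sibling_clade a v (cT t {a, x})"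
proof (rule cT_eqI)
  have ax: "{a, x} \<subseteq> L" "a \<in> {a, x}" "x \<in> {a, x}"
    using assms(3,4) by auto
  note least = cT_least[OF assms(1) ax assms(5)[symmetric]]
  have "a \<in> cT t {a, x}" "x \<in> cT t {a, x}"
    using least(2) by auto
  then show "{v, x} \<subseteq> sibling_clade a v (cT t {a, x})"
    by (simp add: sibling_clade_def)
  show "sibling_clade a v (cT t {a, x}) \<in> clades (add_sibling a v t)"
    using least(1) assms(3,4) by (simp add: clades_add_sibling)
  fix C' assume C': "C' \<in> clades (add_sibling a v t)" "{v, x} \<subseteq> C'"
  show "sibling_clade a v (cT t {a, x}) \<subseteq> C'"
  proof (cases "C' = {a, v}")
    case True
    then show ?thesis
      using C'(2) assms(2,4,5) by auto
  next
    case False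
    then obtain C where C: "C \<in> clades t" "C' = sibling_clade a v C"
      using C'(1) by (auto simp: clades_add_sibling split: if_splits)
    moreover have "v \<notin> C"
      using clade_subset_leaves[OF C(1)] assms(1,2) by (auto simp: binary_tree_on_iff)
    moreover have "x \<noteq> v"
      using assms(2,4) by blast
    ultimately have "{a, x} \<subseteq> C"
      using C'(2) unfolding C(2) sibling_clade_def by (auto split: if_splits)
    then show ?thesis
      unfolding C(2) by (intro sibling_clade_mono least(3)[OF C(1)])
  qed
qed

section \<open>Henneberg graphs are simple\<close>

lemma simple_graph_edge_vertices:
  assumes "simple_graph V E" "{i, j} \<in> E"
  shows "i \<in> V" "j \<in> V"
  using assms unfolding simple_graph_def by (metis doubleton_eq_iff)+

lemma simple_graph_fresh_edge:
  assumes "simple_graph V E" "v \<notin> V"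
  shows "{v, x} \<notin> E"
  using simple_graph_edge_vertices[OF assms(1)] assms(2) by blast

lemma simple_graph_add_vertex:
  assumes "simple_graph V E" "E' \<subseteq> E" "v \<notin> V" "N \<subseteq> V"
  shows "simple_graph (insert v V) (E' \<union> (\<lambda>x. {v, x}) ` N)"
  unfolding simple_graph_def
proof
  fix e assume "e \<in> E' \<union> (\<lambda>x. {v, x}) ` N"
  then show "\<exists>x y. e = {x, y} \<and> x \<noteq> y \<and> x \<in> insert v V \<and> y \<in> insert v V"
  proof
    assume "e \<in> E'"
    with assms(2) have "e \<in> E"
      by blast
    with assms(1) have "\<exists>x y. e = {x, y} \<and> x \<noteq> y \<and> x \<in> V \<and> y \<in> V"
      unfolding simple_graph_def by (rule bspec)
    then show ?thesis
      by blast
  next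
    assume "e \<in> (\<lambda>x. {v, x}) ` N"
    then obtain x where "e = {v, x}" "x \<in> V"
      using assms(4) by blast
    then show ?thesis
      using assms(3) by blast
  qed
qed

lemma henneberg_simple_graph: "henneberg V E \<Longrightarrow> simple_graph V E"
proof (induction rule: henneberg.induct)
  case (K2 a b)
  then show ?case
    unfolding simple_graph_def by blast
next
  case (move1 V E v i j)
  then show ?case
    using simple_graph_add_vertex[of V E E v "{i, j}"] by simp
next
  case (move2 V E v i j k)
  then have "{i, j, k} \<subseteq> V"
    using simple_graph_edge_vertices[OF move2.IH move2.hyps(3)] by blast
  with move2 show ?case
    using simple_graph_add_vertex[of V E "E - {{i, j}}" v "{i, j, k}"] by auto
qed

section \<open>The restricted clade graph along Henneberg moves\<close>

lemma rcg_ends_mem: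
  assumes "binary_tree_on V T1" "binary_tree_on V T2" "x \<in> V" "y \<in> V" "x \<noteq> y"
  shows "rcg_ends T1 T2 {x, y} \<in> rcg_vertices T1 T2 \<times> rcg_vertices T1 T2"
proof -
  have "{x, y} \<subseteq> V" "x \<in> {x, y}" "y \<in> {x, y}"
    using assms(3,4) by auto
  then show ?thesis
    using cT_least(1)[OF assms(1) _ _ _ assms(5)] cT_least(1)[OF assms(2) _ _ _ assms(5)]
    unfolding rcg_ends_def rcg_vertices_def by blast
qed

lemma inj_on_map_sum:
  assumes "inj_on f A" "inj_on g B"
  shows "inj_on (map_sum f g) (Inl ` A \<union> Inr ` B)"
  using assms by (auto intro!: inj_onI dest: inj_onD)

definition sibling_map :: "nat \<Rightarrow> nat \<Rightarrow> nat \<Rightarrow> nat set + nat set \<Rightarrow> nat set + nat set" where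
  "sibling_map a b v = map_sum (sibling_clade a v) (sibling_clade b v)"

lemma sibling_map_simps [simp]:
  "sibling_map a b v (Inl C) = Inl (sibling_clade a v C)"
  "sibling_map a b v (Inr C) = Inr (sibling_clade b v C)"
  by (simp_all add: sibling_map_def)

lemma rcg_vertices_add_sibling:
  assumes "binary_tree_on V T1" "binary_tree_on V T2" "a \<in> V" "b \<in> V"
  shows "rcg_vertices (add_sibling a v T1) (add_sibling b v T2) =
           insert (Inl {a, v}) (insert (Inr {b, v}) (sibling_map a b v ` rcg_vertices T1 T2))"
  using assms unfolding rcg_vertices_def binary_tree_on_iff
  by (auto simp: clades_add_sibling image_Un image_image)

lemma inj_on_sibling_map:
  assumes "binary_tree_on V T1" "binary_tree_on V T2" "v \<notin> V"
  shows "inj_on (sibling_map a b v) (rcg_vertices T1 T2)"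
proof -
  have "clades T1 \<subseteq> {C. v \<notin> C}" "clades T2 \<subseteq> {C. v \<notin> C}"
    using assms clade_subset_leaves unfolding binary_tree_on_iff by blast+
  then have "inj_on (sibling_clade a v) (clades T1)" "inj_on (sibling_clade b v) (clades T2)"
    using inj_on_subset[OF sibling_clade_inj] by blast+
  then show ?thesis
    unfolding rcg_vertices_def sibling_map_def by (rule inj_on_map_sum)
qed

lemma sibling_map_new_vertices:
  assumes "binary_tree_on V T1" "binary_tree_on V T2" "v \<notin> V"
  shows "Inl {a, v} \<notin> sibling_map a b v ` rcg_vertices T1 T2"
    and "Inr {b, v} \<notin> sibling_map a b v ` rcg_vertices T1 T2"
proof -
  have "{c, v} \<noteq> sibling_clade c v C" if "binary_tree_on V t" "C \<in> clades t" for t c C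
  proof -
    have "v \<notin> C"
      using that clade_subset_leaves assms(3) unfolding binary_tree_on_iff by blast
    then show ?thesis
      using clade_not_subset_singleton that sibling_clade_eq_pair[of v C c]
      unfolding binary_tree_on_iff by metis
  qed
  then show "Inl {a, v} \<notin> sibling_map a b v ` rcg_vertices T1 T2"
    and "Inr {b, v} \<notin> sibling_map a b v ` rcg_vertices T1 T2"
    using assms(1,2) unfolding rcg_vertices_def by auto
qed

lemma rcg_ends_add_sibling:
  assumes "binary_tree_on V T1" "binary_tree_on V T2" "v \<notin> V" "simple_graph V E"
  shows "\<forall>e\<in>E. rcg_ends (add_sibling a v T1) (add_sibling b v T2) e =
                map_prod (sibling_map a b v) (sibling_map a b v) (rcg_ends T1 T2 e)"
proof
  fix e assume "e \<in> E"
  then obtain x y where xy: "e = {x, y}" "x \<noteq> y" "x \<in> V" "y \<in> V"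
    using assms(4) unfolding simple_graph_def by blast
  then have S: "{x, y} \<subseteq> V" "x \<in> {x, y}" "y \<in> {x, y}"
    by auto
  show "rcg_ends (add_sibling a v T1) (add_sibling b v T2) e =
               map_prod (sibling_map a b v) (sibling_map a b v) (rcg_ends T1 T2 e)"
    using cT_add_sibling[OF assms(1,3) S xy(2), where a = a]
      cT_add_sibling[OF assms(2,3) S xy(2), where a = b] xy(1)
    unfolding rcg_ends_def by simp
qed

lemma rcg_tree_relabel:
  assumes "binary_tree_on V T1" "binary_tree_on V T2" "v \<notin> V" "simple_graph V E"
    and "mg_tree_by_count (rcg_vertices T1 T2) E (rcg_ends T1 T2)"
  shows "mg_tree_by_count (sibling_map a b v ` rcg_vertices T1 T2) E
           (rcg_ends (add_sibling a v T1) (add_sibling b v T2))"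
  using mg_tree_by_count_image[OF assms(5) inj_on_sibling_map[OF assms(1-3)]]
    rcg_ends_add_sibling[OF assms(1-4)] by blast

lemma rcg_tree_add_sibling_leaves:
  assumes bt: "binary_tree_on V T1" "binary_tree_on V T2"
    and ab: "a \<in> V" "b \<in> V" "a \<noteq> b" and "v \<notin> V"
    and tree: "mg_tree_by_count (sibling_map a b v ` rcg_vertices T1 T2) I
                 (rcg_ends (add_sibling a v T1) (add_sibling b v T2))"
    and fresh: "{v, a} \<notin> I" "{v, b} \<notin> I"
  shows "mg_tree_by_count (rcg_vertices (add_sibling a v T1) (add_sibling b v T2))
           (insert {v, a} (insert {v, b} I)) (rcg_ends (add_sibling a v T1) (add_sibling b v T2))"
proof -
  let ?h = "sibling_map a b v" and ?W = "rcg_vertices T1 T2"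
    and ?ends = "rcg_ends (add_sibling a v T1) (add_sibling b v T2)"
  have "a \<in> leaves T1" "b \<in> leaves T2"
    using bt ab unfolding binary_tree_on_iff by auto
  then have ends_va: "?ends {v, a} = (Inl {a, v}, ?h (Inr (cT T2 {b, a})))"
    and ends_vb: "?ends {v, b} = (?h (Inl (cT T1 {a, b})), Inr {b, v})"
    using cT_add_sibling_pair cT_add_sibling_new[OF bt(1) \<open>v \<notin> V\<close> ab(1,2)]
      cT_add_sibling_new[OF bt(2) \<open>v \<notin> V\<close> ab(2,1)] ab(3)
    unfolding rcg_ends_def by (simp_all add: insert_commute)
  have "Inl (cT T1 {a, b}) \<in> ?W" "Inr (cT T2 {b, a}) \<in> ?W"
    using rcg_ends_mem[OF bt ab(1,2,3)] rcg_ends_mem[OF bt ab(2,1) ab(3)[symmetric]]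
    unfolding rcg_ends_def by auto
  then have u: "?h (Inl (cT T1 {a, b})) \<in> ?h ` ?W" "?h (Inr (cT T2 {b, a})) \<in> ?h ` ?W"
    by blast+
  note new = sibling_map_new_vertices[OF bt \<open>v \<notin> V\<close>, where a = a and b = b]
  have "mg_tree_by_count (insert (Inr {b, v}) (?h ` ?W)) (insert {v, b} I) ?ends"
    by (rule mg_tree_by_count_add_leaf[OF tree new(2) fresh(2), of "?h (Inl (cT T1 {a, b}))"])
       (use u(1) ends_vb in auto)
  then have "mg_tree_by_count (insert (Inl {a, v}) (insert (Inr {b, v}) (?h ` ?W)))
               (insert {v, a} (insert {v, b} I)) ?ends"
    by (rule mg_tree_by_count_add_leaf[of _ _ _ _ _ "?h (Inr (cT T2 {b, a}))"])
       (use new(1) fresh(1) ab(3) u(2) ends_va in \<open>auto simp: doubleton_eq_iff\<close>)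
  then show ?thesis
    using rcg_vertices_add_sibling[OF bt ab(1,2)] by simp
qed

lemma rcg_tree_move1:
  assumes bt: "binary_tree_on V T1" "binary_tree_on V T2" and "simple_graph V E"
    and tree: "mg_tree_by_count (rcg_vertices T1 T2) E (rcg_ends T1 T2)"
    and ab: "a \<in> V" "b \<in> V" "a \<noteq> b" and "v \<notin> V"
  shows "\<exists>T1' T2'. binary_tree_on (insert v V) T1' \<and> binary_tree_on (insert v V) T2' \<and>
           mg_tree_by_count (rcg_vertices T1' T2') (E \<union> {{v, a}, {v, b}}) (rcg_ends T1' T2')"
proof (intro exI conjI)
  show "binary_tree_on (insert v V) (add_sibling a v T1)" "binary_tree_on (insert v V) (add_sibling b v T2)"
    using binary_tree_on_add_sibling bt ab \<open>v \<notin> V\<close> by blast+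
  have "mg_tree_by_count (rcg_vertices (add_sibling a v T1) (add_sibling b v T2))
          (insert {v, a} (insert {v, b} E)) (rcg_ends (add_sibling a v T1) (add_sibling b v T2))"
    using rcg_tree_add_sibling_leaves[OF bt ab \<open>v \<notin> V\<close> rcg_tree_relabel[OF bt \<open>v \<notin> V\<close> assms(3) tree]]
      simple_graph_fresh_edge[OF assms(3) \<open>v \<notin> V\<close>] by blast
  then show "mg_tree_by_count (rcg_vertices (add_sibling a v T1) (add_sibling b v T2))
          (E \<union> {{v, a}, {v, b}}) (rcg_ends (add_sibling a v T1) (add_sibling b v T2))"
    by (simp add: insert_commute)
qed

lemma rcg_tree_move2_placement:
  assumes bt: "binary_tree_on V T1" "binary_tree_on V T2" and "simple_graph V E"
    and tree: "mg_tree_by_count (rcg_vertices T1 T2) E (rcg_ends T1 T2)"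
    and abc: "a \<in> V" "b \<in> V" "c \<in> V" "a \<noteq> b" "a \<noteq> c" "b \<noteq> c" and "v \<notin> V" "e \<in> E"
    and separated: "\<not> mg_reach (E - {e}) (rcg_ends T1 T2) (Inl (cT T1 {a, c})) (Inr (cT T2 {b, c}))"
  shows "\<exists>T1' T2'. binary_tree_on (insert v V) T1' \<and> binary_tree_on (insert v V) T2' \<and>
           mg_tree_by_count (rcg_vertices T1' T2') ((E - {e}) \<union> {{v, a}, {v, b}, {v, c}})
             (rcg_ends T1' T2')"
proof (intro exI conjI)
  let ?h = "sibling_map a b v" and ?W = "rcg_vertices T1 T2"
    and ?ends = "rcg_ends (add_sibling a v T1) (add_sibling b v T2)"
  define X Y :: "nat set + nat set" where "X = Inl (cT T1 {a, c})" and "Y = Inr (cT T2 {b, c})"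
  show "binary_tree_on (insert v V) (add_sibling a v T1)" "binary_tree_on (insert v V) (add_sibling b v T2)"
    using binary_tree_on_add_sibling bt abc \<open>v \<notin> V\<close> by blast+
  note fresh = simple_graph_fresh_edge[OF assms(3) \<open>v \<notin> V\<close>]
  note relabel = rcg_tree_relabel[OF bt \<open>v \<notin> V\<close> assms(3) tree, where a = a and b = b]
  note ends_relabel = rcg_ends_add_sibling[OF bt \<open>v \<notin> V\<close> assms(3), where a = a and b = b]
  have "X \<in> ?W" "Y \<in> ?W"
    using rcg_ends_mem[OF bt abc(1,3,5)] rcg_ends_mem[OF bt abc(2,3,6)]
    unfolding X_def Y_def rcg_ends_def by auto
  have ends_vc: "?ends {v, c} = (?h X, ?h Y)"
    using cT_add_sibling_new[OF bt(1) \<open>v \<notin> V\<close> abc(1,3)] cT_add_sibling_new[OF bt(2) \<open>v \<notin> V\<close> abc(2,3)]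
      abc(5,6) unfolding X_def Y_def rcg_ends_def by simp
  have "rcg_ends T1 T2 ` (E - {e}) \<subseteq> ?W \<times> ?W"
    using tree unfolding mg_tree_by_count_def by blast
  moreover have "\<forall>e'\<in>E - {e}. ?ends e' = map_prod ?h ?h (rcg_ends T1 T2 e')"
    using ends_relabel by blast
  ultimately have "\<not> mg_reach (E - {e}) ?ends (?h X) (?h Y)"
    using mg_reach_image_inj[OF inj_on_sibling_map[OF bt \<open>v \<notin> V\<close>]]
      \<open>X \<in> ?W\<close> \<open>Y \<in> ?W\<close> separated unfolding X_def Y_def by metis
  moreover have "?h X \<in> ?h ` ?W" "?h Y \<in> ?h ` ?W"
    using \<open>X \<in> ?W\<close> \<open>Y \<in> ?W\<close> by blast+
  ultimately have "mg_tree_by_count (?h ` ?W) (insert {v, c} (E - {e})) ?ends"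
    by (rule mg_tree_by_count_exchange[OF relabel \<open>e \<in> E\<close> fresh ends_vc, rotated -1])
  then have "mg_tree_by_count (rcg_vertices (add_sibling a v T1) (add_sibling b v T2))
      (insert {v, a} (insert {v, b} (insert {v, c} (E - {e})))) ?ends"
    using rcg_tree_add_sibling_leaves[OF bt abc(1,2,4) \<open>v \<notin> V\<close>] fresh abc(4-6)
    by (simp add: doubleton_eq_iff)
  then show "mg_tree_by_count (rcg_vertices (add_sibling a v T1) (add_sibling b v T2))
      ((E - {e}) \<union> {{v, a}, {v, b}, {v, c}}) ?ends"
    by (simp add: insert_commute)
qed

lemma rcg_tree_move2:
  assumes bt: "binary_tree_on V T1" "binary_tree_on V T2" and "simple_graph V E"
    and tree: "mg_tree_by_count (rcg_vertices T1 T2) E (rcg_ends T1 T2)"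
    and ij: "{i, j} \<in> E" "i \<noteq> j" and k: "k \<in> V" "k \<noteq> i" "k \<noteq> j" and "v \<notin> V"
  shows "\<exists>T1' T2'. binary_tree_on (insert v V) T1' \<and> binary_tree_on (insert v V) T2' \<and>
           mg_tree_by_count (rcg_vertices T1' T2') ((E - {{i, j}}) \<union> {{v, i}, {v, j}, {v, k}})
             (rcg_ends T1' T2')"
proof -
  let ?reach = "mg_reach (E - {{i, j}}) (rcg_ends T1 T2)"
  define P Q X Y :: "nat set + nat set"
    where "P = Inl (cT T1 {i, j})" and "Q = Inr (cT T2 {i, j})"
      and "X = Inl (cT T1 {i, k})" and "Y = Inr (cT T2 {j, k})"
  have "i \<in> V" "j \<in> V"
    using simple_graph_edge_vertices[OF assms(3) ij(1)] by auto
  note placement = rcg_tree_move2_placement[OF bt assms(3) tree _ _ _ _ _ _ \<open>v \<notin> V\<close> ij(1)]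
  have "\<not> ?reach P Q"
    using mg_tree_by_count_bridge[OF tree ij(1)] unfolding P_def Q_def rcg_ends_def by blast
  \<comment> \<open>Otherwise \<open>P\<close>, \<open>Y\<close>, \<open>X\<close>, \<open>Q\<close> would be connected in this order.\<close>
  then consider "\<not> ?reach X Q" | "\<not> ?reach P Y" | "\<not> ?reach X Y"
    by (meson equivclp_sym equivclp_trans)
  then show ?thesis
  proof cases
    case 1
    then show ?thesis
      using placement[of k j i] \<open>i \<in> V\<close> \<open>j \<in> V\<close> k ij(2)
      unfolding X_def Q_def by (simp add: insert_commute)
  next
    case 2
    then show ?thesis
      using placement[of i k j] \<open>i \<in> V\<close> \<open>j \<in> V\<close> k ij(2)
      unfolding P_def Y_def by (simp add: insert_commute)
  next
    case 3
    then show ?thesis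
      using placement[of i j k] \<open>i \<in> V\<close> \<open>j \<in> V\<close> k ij(2)
      unfolding X_def Y_def by (simp add: insert_commute)
  qed
qed

lemma henneberg_clade_graph_tree:
  fixes V :: "nat set"
  assumes "henneberg V E"
  shows "\<exists>T1 T2. binary_tree_on V T1 \<and> binary_tree_on V T2 \<and>
           mg_tree_by_count (rcg_vertices T1 T2) E (rcg_ends T1 T2)"
  using assms
proof (induction rule: henneberg.induct)
  case (K2 a b)
  define T where "T = Node (Leaf a) (Leaf b)"
  have "binary_tree_on {a, b} T" "clades T = {{a, b}}"
    using K2 by (simp_all add: T_def binary_tree_on_def insert_commute)
  then have "cT T {a, b} = {a, b}"
    by (intro cT_eqI) auto
  then have "mg_tree_by_count (insert (Inr {a, b}) {Inl {a, b}}) (insert {a, b} {}) (rcg_ends T T)"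
    by (intro mg_tree_by_count_add_leaf mg_tree_by_count_singleton) (auto simp: rcg_ends_def)
  moreover have "rcg_vertices T T = insert (Inr {a, b}) {Inl {a, b}}"
    using \<open>clades T = {{a, b}}\<close> by (auto simp: rcg_vertices_def)
  ultimately show ?case
    using \<open>binary_tree_on {a, b} T\<close> by (intro exI[of _ T]) simp
next
  case (move1 V E v i j)
  then show ?case
    using rcg_tree_move1 henneberg_simple_graph by blast
next
  case (move2 V E v i j k)
  then show ?case
    using rcg_tree_move2 henneberg_simple_graph by blast
qed

theorem lemma4p6:
  fixes n :: nat and E :: "nat set set"
  assumes "n \<ge> 2"
    and "simple_graph {1..n} E"
    and "henneberg {1..n} E"
  shows "\<exists>T1 T2. binary_tree_on {1..n} T1 \<and> binary_tree_on {1..n} T2 \<and>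
                  restricted_clade_graph_is_tree E T1 T2"
  \<comment> \<open>Simplicity is implied by the Henneberg construction, and \<open>n \<ge> 2\<close> by \<open>K\<^sub>2\<close>.\<close>
  using henneberg_clade_graph_tree[OF assms(3)] mg_tree_by_count_is_tree
  unfolding restricted_clade_graph_is_tree_def by blast

end
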